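(* Let $\ket\Psi_{ABC}=\ket{\psi_1}_{A_1B_1}\otimes\ket{\psi_2}_{A_2C_1}\otimes\ket{\psi_3}_{B_2C_2}$ with $\mathcal H_A=\mathcal H_{A_1}\otimes\mathcal H_{A_2}$, $\mathcal H_B=\mathcal H_{B_1}\otimes\mathcal H_{B_2}$, $\mathcal H_C=\mathcal H_{C_1}\otimes\mathcal H_{C_2}$ and $\ket{\psi_i}$ unit vectors. Then for every integer $n\ge2$, $Z_n(A:B:C)_{\ket\Psi}>0$ and $$G_n(A:B:C)_{\ket\Psi}=\tfrac12\big(S_n(A)+S_n(B)+S_n(C)\big),$$ where $S_n(X)=\frac{1}{1-n}\log\operatorname{tr}\rho_X^n$ is the Rényi-$n$ entropy of the reduced state of $\ket\Psi$ on $X$. In particular $G(A:B:C)_{\ket\Psi}=\tfrac12(S_2(A)+S_2(B)+S_2(C))$.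
   Context: For a subsystem $X$ and $\pi\in S_N$, $\pi_X$ permutes the $N$ copies of $\mathcal H_X$ according to $\pi$ and acts trivially otherwise. For integer $n\ge2$, arrange $1,\dots,n^2$ in an $n\times n$ array row by row; $\pi^{(1)}\in S_{n^2}$ is the product of the $n$ cycles $(kn+1,\dots,kn+n)$, $k=0,\dots,n-1$ (cycling each row), and $\pi^{(2)}\in S_{n^2}$ is the product of the $n$ cycles $(j,n+j,\dots,(n-1)n+j)$, $j=1,\dots,n$ (cycling each column). $Z_n(A:B:C)_{\ket\Psi}=\bra\Psi^{\otimes n^2}(\pi^{(1)}_A\otimes\pi^{(2)}_B\otimes\mathrm{id}_C)\ket\Psi^{\otimes n^2}$ and, when $Z_n>0$, $G_n(A:B:C)_{\ket\Psi}=\frac{1}{n(1-n)}\log Z_n(A:B:C)_{\ket\Psi}$. For $n=2$, $G_2=G$ where $G(A:B:C)=-\tfrac12\log\bra\Psi^{\otimes4}((12)(34)_A\otimes(13)(24)_B\otimes(14)(23)_C)\ket\Psi^{\otimes4}$. *)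

theory Defs
  imports Complex_Main "HOL-Library.FuncSet"
begin

text \<open>Finite-dimensional pure states are amplitude functions on finite index types.
A tripartite state on A,B,C is a function Psi a b c.\<close>

definition unit_bip :: "('x::finite \<Rightarrow> 'y::finite \<Rightarrow> complex) \<Rightarrow> bool" where
  "unit_bip \<psi> \<longleftrightarrow> (\<Sum>x\<in>UNIV. \<Sum>y\<in>UNIV. (cmod (\<psi> x y))^2) = 1"

definition tri_state ::
  "('a1 \<Rightarrow> 'b1 \<Rightarrow> complex) \<Rightarrow> ('a2 \<Rightarrow> 'c1 \<Rightarrow> complex) \<Rightarrow> ('b2 \<Rightarrow> 'c2 \<Rightarrow> complex)
   \<Rightarrow> ('a1 \<times> 'a2) \<Rightarrow> ('b1 \<times> 'b2) \<Rightarrow> ('c1 \<times> 'c2) \<Rightarrow> complex" where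
  "tri_state \<psi>1 \<psi>2 \<psi>3 a b c = \<psi>1 (fst a) (fst b) * \<psi>2 (snd a) (fst c) * \<psi>3 (snd b) (snd c)"

text \<open>Expectation value of pi_A tensor pi_B tensor pi_C in Psi^{tensor N}, copies labelled 1..N.
(pi_X acts by (pi Phi)(x_1..x_N) = Phi(x_{pi 1},...,x_{pi N}).)\<close>
definition perm_expect ::
  "('a::finite \<Rightarrow> 'b::finite \<Rightarrow> 'c::finite \<Rightarrow> complex) \<Rightarrow> nat
   \<Rightarrow> (nat \<Rightarrow> nat) \<Rightarrow> (nat \<Rightarrow> nat) \<Rightarrow> (nat \<Rightarrow> nat) \<Rightarrow> complex" where
  "perm_expect \<Psi> N \<sigma>A \<sigma>B \<sigma>C =
     (\<Sum>a \<in> {1..N} \<rightarrow>\<^sub>E UNIV. \<Sum>b \<in> {1..N} \<rightarrow>\<^sub>E UNIV. \<Sum>c \<in> {1..N} \<rightarrow>\<^sub>E UNIV.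
        (\<Prod>i\<in>{1..N}. cnj (\<Psi> (a i) (b i) (c i))) *
        (\<Prod>i\<in>{1..N}. \<Psi> (a (\<sigma>A i)) (b (\<sigma>B i)) (c (\<sigma>C i))))"

text \<open>pi^(1): cycle each row (kn+1 .. kn+n) of the n x n array of 1..n^2.\<close>
definition row_cycle :: "nat \<Rightarrow> nat \<Rightarrow> nat" where
  "row_cycle n i = (if 1 \<le> i \<and> i \<le> n^2
     then ((i - 1) div n) * n + (((i - 1) mod n + 1) mod n) + 1 else i)"

text \<open>pi^(2): cycle each column (j, n+j, ..., (n-1)n+j).\<close>
definition col_cycle :: "nat \<Rightarrow> nat \<Rightarrow> nat" where
  "col_cycle n i = (if 1 \<le> i \<and> i \<le> n^2
     then (((i - 1) div n + 1) mod n) * n + (i - 1) mod n + 1 else i)"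

definition Zn :: "nat \<Rightarrow> ('a::finite \<Rightarrow> 'b::finite \<Rightarrow> 'c::finite \<Rightarrow> complex) \<Rightarrow> complex" where
  "Zn n \<Psi> = perm_expect \<Psi> (n^2) (row_cycle n) (col_cycle n) id"

text \<open>G_n, meaningful when Z_n is a positive real (then Z_n = Re Z_n).\<close>
definition Gn :: "nat \<Rightarrow> ('a::finite \<Rightarrow> 'b::finite \<Rightarrow> 'c::finite \<Rightarrow> complex) \<Rightarrow> real" where
  "Gn n \<Psi> = ln (Re (Zn n \<Psi>)) / (real n * (1 - real n))"

definition permGA :: "nat \<Rightarrow> nat" where
  "permGA i = (if i = 1 then 2 else if i = 2 then 1 else if i = 3 then 4 else if i = 4 then 3 else i)"
definition permGB :: "nat \<Rightarrow> nat" where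
  "permGB i = (if i = 1 then 3 else if i = 3 then 1 else if i = 2 then 4 else if i = 4 then 2 else i)"
definition permGC :: "nat \<Rightarrow> nat" where
  "permGC i = (if i = 1 then 4 else if i = 4 then 1 else if i = 2 then 3 else if i = 3 then 2 else i)"

definition G :: "('a::finite \<Rightarrow> 'b::finite \<Rightarrow> 'c::finite \<Rightarrow> complex) \<Rightarrow> real" where
  "G \<Psi> = - (1/2) * ln (Re (perm_expect \<Psi> 4 permGA permGB permGC))"

definition mmul :: "('x::finite \<Rightarrow> 'x \<Rightarrow> complex) \<Rightarrow> ('x \<Rightarrow> 'x \<Rightarrow> complex) \<Rightarrow> 'x \<Rightarrow> 'x \<Rightarrow> complex" where
  "mmul M N x z = (\<Sum>y\<in>UNIV. M x y * N y z)"

fun mpow :: "('x::finite \<Rightarrow> 'x \<Rightarrow> complex) \<Rightarrow> nat \<Rightarrow> 'x \<Rightarrow> 'x \<Rightarrow> complex" where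
  "mpow M 0 = (\<lambda>x y. if x = y then 1 else 0)"
| "mpow M (Suc k) = mmul (mpow M k) M"

definition mtrace :: "('x::finite \<Rightarrow> 'x \<Rightarrow> complex) \<Rightarrow> complex" where
  "mtrace M = (\<Sum>x\<in>UNIV. M x x)"

definition rhoA :: "('a::finite \<Rightarrow> 'b::finite \<Rightarrow> 'c::finite \<Rightarrow> complex) \<Rightarrow> 'a \<Rightarrow> 'a \<Rightarrow> complex" where
  "rhoA \<Psi> x x' = (\<Sum>b\<in>UNIV. \<Sum>c\<in>UNIV. \<Psi> x b c * cnj (\<Psi> x' b c))"
definition rhoB :: "('a::finite \<Rightarrow> 'b::finite \<Rightarrow> 'c::finite \<Rightarrow> complex) \<Rightarrow> 'b \<Rightarrow> 'b \<Rightarrow> complex" where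
  "rhoB \<Psi> y y' = (\<Sum>a\<in>UNIV. \<Sum>c\<in>UNIV. \<Psi> a y c * cnj (\<Psi> a y' c))"
definition rhoC :: "('a::finite \<Rightarrow> 'b::finite \<Rightarrow> 'c::finite \<Rightarrow> complex) \<Rightarrow> 'c \<Rightarrow> 'c \<Rightarrow> complex" where
  "rhoC \<Psi> z z' = (\<Sum>a\<in>UNIV. \<Sum>b\<in>UNIV. \<Psi> a b z * cnj (\<Psi> a b z'))"

text \<open>Renyi-n entropy S_n = log(tr rho^n)/(1-n) (tr rho^n is a positive real for a density matrix).\<close>
definition renyi :: "nat \<Rightarrow> ('x::finite \<Rightarrow> 'x \<Rightarrow> complex) \<Rightarrow> real" where
  "renyi n \<rho> = ln (Re (mtrace (mpow \<rho> n))) / (1 - real n)"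

end

theory Submission
  imports Defs
begin

text \<open>The amplitudes of \<open>\<Psi>\<close> factor over the three pairs, so the expectation of
  \<open>\<pi>\<^sub>A \<otimes> \<pi>\<^sub>B \<otimes> \<pi>\<^sub>C\<close> in \<open>\<Psi>\<^sup>\<otimes>\<^sup>N\<close> is a product of three bipartite expectations, the pair
  \<open>\<psi>\<close> on the legs \<open>X, Y\<close> seeing \<open>\<pi>\<^sub>X\<close> and \<open>\<pi>\<^sub>Y\<close>. Summing out the \<open>Y\<close>-leg turns such an
  expectation into a sum over labellings of the copies of products of entries of \<open>\<psi>\<psi>\<^sup>*\<close>
  along \<open>\<pi>\<^sub>X\<pi>\<^sub>Y\<inverse>\<close>, that is, a product over the cycles of \<open>\<pi>\<^sub>X\<pi>\<^sub>Y\<inverse>\<close> of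
  \<open>tr (\<psi>\<psi>\<^sup>*)\<^sup>\<ell>\<close>, \<open>\<ell>\<close> the cycle length. For \<open>Z\<^sub>n\<close> the three permutations that occur,
  \<open>\<pi>\<^sup>(\<^sup>1\<^sup>)(\<pi>\<^sup>(\<^sup>2\<^sup>))\<inverse>\<close>, \<open>\<pi>\<^sup>(\<^sup>1\<^sup>)\<close> and \<open>\<pi>\<^sup>(\<^sup>2\<^sup>)\<close>, all consist of \<open>n\<close> cycles of length \<open>n\<close>, whence
  \<open>Z\<^sub>n = \<Prod>\<^sub>i (tr (\<psi>\<^sub>i\<psi>\<^sub>i\<^sup>*)\<^sup>n)\<^sup>n\<close>. Each reduced state of \<open>\<Psi>\<close> is a Kronecker product of two of
  the marginals \<open>\<psi>\<^sub>i\<psi>\<^sub>i\<^sup>*\<close> (up to transposition and \<open>\<psi>\<^sup>*\<psi>\<close> versus \<open>\<psi>\<psi>\<^sup>*\<close>, which have the same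
  power traces), and these traces are positive, so taking logarithms gives the identity.\<close>

section \<open>Matrices as functions\<close>

definition mat_mul :: "('x \<Rightarrow> 'y::finite \<Rightarrow> complex) \<Rightarrow> ('y \<Rightarrow> 'z \<Rightarrow> complex) \<Rightarrow> 'x \<Rightarrow> 'z \<Rightarrow> complex" where
  "mat_mul A B x z = (\<Sum>y\<in>UNIV. A x y * B y z)"

definition mat_adj :: "('x \<Rightarrow> 'y \<Rightarrow> complex) \<Rightarrow> 'y \<Rightarrow> 'x \<Rightarrow> complex" where
  "mat_adj A y x = cnj (A x y)"

definition mat_transpose :: "('x \<Rightarrow> 'y \<Rightarrow> complex) \<Rightarrow> 'y \<Rightarrow> 'x \<Rightarrow> complex" where
  "mat_transpose A y x = A x y"

definition mat_one :: "'x \<Rightarrow> 'x \<Rightarrow> complex" where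
  "mat_one x y = (if x = y then 1 else 0)"

definition mat_kron :: "('x1 \<Rightarrow> 'x1 \<Rightarrow> complex) \<Rightarrow> ('x2 \<Rightarrow> 'x2 \<Rightarrow> complex) \<Rightarrow> 'x1 \<times> 'x2 \<Rightarrow> 'x1 \<times> 'x2 \<Rightarrow> complex" where
  "mat_kron A B p q = A (fst p) (fst q) * B (snd p) (snd q)"

definition hs_norm2 :: "('x::finite \<Rightarrow> 'y::finite \<Rightarrow> complex) \<Rightarrow> real" where
  "hs_norm2 A = (\<Sum>x\<in>UNIV. \<Sum>y\<in>UNIV. (cmod (A x y))^2)"

abbreviation gram :: "('x \<Rightarrow> 'y::finite \<Rightarrow> complex) \<Rightarrow> 'x \<Rightarrow> 'x \<Rightarrow> complex" where
  "gram \<psi> \<equiv> mat_mul \<psi> (mat_adj \<psi>)"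

lemma mmul_eq_mat_mul: "mmul = mat_mul"
  by (intro ext) (simp add: mmul_def mat_mul_def)

lemma mpow_0 [simp]: "mpow M 0 = mat_one"
  by (simp add: mat_one_def[abs_def])

lemma mpow_Suc: "mpow M (Suc k) = mat_mul (mpow M k) M"
  by (simp add: mmul_eq_mat_mul)

declare mpow.simps [simp del]

lemma mat_mul_assoc: "mat_mul (mat_mul A B) C = mat_mul A (mat_mul B C)"
  by (intro ext) (simp add: mat_mul_def sum_distrib_left sum_distrib_right mult.assoc, rule sum.swap)

lemma mat_mul_one_right [simp]: "mat_mul A mat_one = A"
  by (intro ext) (simp add: mat_mul_def mat_one_def if_distrib sum.delta' cong: if_cong)

lemma mat_mul_one_left [simp]: "mat_mul mat_one A = A"
proof (intro ext)
  fix x z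
  have "(if x = y then 1 else 0) * A y z = (if x = y then A y z else 0)" for y
    by simp
  then show "mat_mul mat_one A x z = A x z"
    by (simp add: mat_mul_def mat_one_def)
qed

lemma mat_mul_zero_left [simp]: "mat_mul (\<lambda>x y. 0) B = (\<lambda>x y. 0)"
  by (intro ext) (simp add: mat_mul_def)

lemma mpow_add: "mpow M (a + b) = mat_mul (mpow M a) (mpow M b)"
  by (induction b) (simp_all add: mpow_Suc mat_mul_assoc)

lemma mpow_1 [simp]: "mpow M (Suc 0) = M"
  by (simp add: mpow_Suc)

lemma mpow_Suc_left: "mpow M (Suc k) = mat_mul M (mpow M k)"
  using mpow_add[of M 1 k] by simp

lemma mtrace_mat_mul_commute: "mtrace (mat_mul A B) = mtrace (mat_mul B A)"
  unfolding mtrace_def mat_mul_def by (subst sum.swap) (simp add: mult.commute)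

lemma mtrace_zero [simp]: "mtrace (\<lambda>x y. 0) = 0"
  by (simp add: mtrace_def)

lemma mat_adj_mat_mul: "mat_adj (mat_mul A B) = mat_mul (mat_adj B) (mat_adj A)"
  by (intro ext) (simp add: mat_adj_def mat_mul_def mult.commute)

lemma mat_adj_mat_adj [simp]: "mat_adj (mat_adj A) = A"
  by (intro ext) (simp add: mat_adj_def)

lemma mat_adj_mpow_gram: "mat_adj (mpow (gram \<psi>) k) = mpow (gram \<psi>) k"
proof (induction k)
  case 0
  show ?case by (intro ext) (simp add: mat_adj_def mat_one_def)
next
  case (Suc k)
  have "mat_adj (mpow (gram \<psi>) (Suc k)) = mat_mul (gram \<psi>) (mat_adj (mpow (gram \<psi>) k))"
    by (simp add: mpow_Suc mat_adj_mat_mul)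
  then show ?case
    by (simp add: Suc.IH mpow_Suc_left)
qed

lemma mtrace_gram: "mtrace (gram A) = complex_of_real (hs_norm2 A)"
  unfolding mtrace_def mat_mul_def mat_adj_def hs_norm2_def
  by (simp add: complex_norm_square[symmetric] del: of_real_power)

lemma hs_norm2_pos_iff: "hs_norm2 A > 0 \<longleftrightarrow> A \<noteq> (\<lambda>x y. 0)"
proof -
  have "hs_norm2 A = 0 \<longleftrightarrow> (\<forall>x y. A x y = 0)"
    unfolding hs_norm2_def by (simp add: sum_nonneg_eq_0_iff sum_nonneg)
  moreover have "hs_norm2 A \<ge> 0"
    unfolding hs_norm2_def by (intro sum_nonneg) auto
  ultimately show ?thesis by (auto simp: fun_eq_iff)
qed

lemma unit_bip_hs_norm2: "unit_bip \<psi> \<longleftrightarrow> hs_norm2 \<psi> = 1"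
  by (simp add: unit_bip_def hs_norm2_def)

lemma mpow_gram_even: "mpow (gram \<psi>) (k + k) = gram (mpow (gram \<psi>) k)"
  by (simp add: mpow_add mat_adj_mpow_gram)

lemma mpow_gram_odd: "mpow (gram \<psi>) (Suc (k + k)) = gram (mat_mul (mpow (gram \<psi>) k) \<psi>)"
proof -
  have "mpow (gram \<psi>) (Suc (k + k)) = mat_mul (mpow (gram \<psi>) k) (mat_mul (gram \<psi>) (mpow (gram \<psi>) k))"
    by (simp add: mpow_add[symmetric] mpow_Suc_left[symmetric])
  then show ?thesis
    by (simp add: mat_adj_mat_mul mat_adj_mpow_gram mat_mul_assoc)
qed

text \<open>If the \<open>j\<close>-th power of \<open>R = \<psi>\<psi>\<^sup>*\<close> vanished, so would \<open>R\<^sup>2\<^sup>m = R\<^sup>m(R\<^sup>m)\<^sup>*\<close> for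
  \<open>m = \<lceil>j/2\<rceil> < j\<close>, hence \<open>R\<^sup>m\<close> itself.\<close>
lemma mpow_gram_nonzero:
  fixes \<psi> :: "'x::finite \<Rightarrow> 'y::finite \<Rightarrow> complex"
  assumes "\<psi> \<noteq> (\<lambda>x y. 0)"
  shows "mpow (gram \<psi>) j \<noteq> (\<lambda>x y. 0)"
proof (induction j rule: less_induct)
  case (less j)
  consider "j = 0" | "j = 1" | "j \<ge> 2" by linarith
  then show ?case
  proof cases
    case 1
    then show ?thesis by (auto simp: fun_eq_iff mat_one_def)
  next
    case 2
    have "mtrace (gram \<psi>) \<noteq> 0"
      using assms by (simp add: mtrace_gram hs_norm2_pos_iff[symmetric])
    with 2 show ?thesis by auto
  next
    case 3
    define m where "m = (j + 1) div 2"
    have m: "m < j" "j \<le> m + m" using 3 by (auto simp: m_def)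
    show ?thesis
    proof
      assume "mpow (gram \<psi>) j = (\<lambda>x y. 0)"
      then have "mpow (gram \<psi>) (m + m) = (\<lambda>x y. 0)"
        using mpow_add[of "gram \<psi>" j "m + m - j"] m by simp
      then have "hs_norm2 (mpow (gram \<psi>) m) = 0"
        using mtrace_gram[of "mpow (gram \<psi>) m"] by (simp add: mpow_gram_even)
      then show False
        using less.IH[OF m(1)] hs_norm2_pos_iff[of "mpow (gram \<psi>) m"] by simp
    qed
  qed
qed

lemma mtrace_mpow_gram_pos:
  fixes \<psi> :: "'x::finite \<Rightarrow> 'y::finite \<Rightarrow> complex"
  assumes "\<psi> \<noteq> (\<lambda>x y. 0)"
  shows "\<exists>t>0. mtrace (mpow (gram \<psi>) n) = complex_of_real t"
proof (cases "even n")
  case True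
  then obtain k where n: "n = k + k" by (metis evenE mult_2)
  show ?thesis
    using mpow_gram_nonzero[OF assms, of k]
    by (simp add: n mpow_gram_even mtrace_gram hs_norm2_pos_iff)
next
  case False
  then obtain k where n: "n = Suc (k + k)" by (metis oddE mult_2 Suc_eq_plus1)
  have "mat_mul (mpow (gram \<psi>) k) \<psi> \<noteq> (\<lambda>x y. 0)"
    using mpow_gram_nonzero[OF assms, of "Suc k"]
    by (auto simp: mpow_Suc mat_mul_assoc[symmetric])
  then show ?thesis
    by (simp add: n mpow_gram_odd mtrace_gram hs_norm2_pos_iff)
qed

lemma mat_transpose_mat_mul: "mat_transpose (mat_mul A B) = mat_mul (mat_transpose B) (mat_transpose A)"
  by (intro ext) (simp add: mat_transpose_def mat_mul_def mult.commute)

lemma mpow_mat_transpose: "mpow (mat_transpose M) n = mat_transpose (mpow M n)"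
proof (induction n)
  case 0
  show ?case by (intro ext) (simp add: mat_transpose_def mat_one_def)
next
  case (Suc n)
  have "mpow (mat_transpose M) (Suc n) = mat_transpose (mat_mul M (mpow M n))"
    by (simp add: mpow_Suc Suc.IH mat_transpose_mat_mul)
  then show ?case by (simp only: mpow_Suc_left)
qed

lemma mtrace_mat_transpose [simp]: "mtrace (mat_transpose M) = mtrace M"
  by (simp add: mtrace_def mat_transpose_def)

lemma mpow_adj_gram_Suc:
  "mpow (mat_mul (mat_adj \<psi>) \<psi>) (Suc k) = mat_mul (mat_adj \<psi>) (mat_mul (mpow (gram \<psi>) k) \<psi>)"
proof (induction k)
  case 0
  show ?case by simp
next
  case (Suc k)
  then show ?case by (simp add: mpow_Suc[of _ "Suc k"] mpow_Suc[of "gram \<psi>"] mat_mul_assoc)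
qed

lemma mtrace_mpow_adj_gram:
  assumes "n \<ge> 1"
  shows "mtrace (mpow (mat_mul (mat_adj \<psi>) \<psi>) n) = mtrace (mpow (gram \<psi>) n)"
proof -
  obtain k where n: "n = Suc k" using assms by (cases n) auto
  show ?thesis
    by (simp add: n mpow_adj_gram_Suc mtrace_mat_mul_commute[of "mat_adj \<psi>"])
      (simp add: mpow_Suc mat_mul_assoc)
qed

lemma mat_transpose_gram_transpose: "mat_transpose (gram (mat_transpose \<psi>)) = mat_mul (mat_adj \<psi>) \<psi>"
  by (intro ext) (simp add: mat_transpose_def mat_mul_def mat_adj_def mult.commute)

lemma mtrace_mpow_gram_transpose:
  assumes "n \<ge> 1"
  shows "mtrace (mpow (gram (mat_transpose \<psi>)) n) = mtrace (mpow (gram \<psi>) n)"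
proof -
  have "mtrace (mpow (gram (mat_transpose \<psi>)) n) = mtrace (mpow (mat_transpose (gram (mat_transpose \<psi>))) n)"
    by (simp add: mpow_mat_transpose)
  also have "\<dots> = mtrace (mpow (gram \<psi>) n)"
    using mtrace_mpow_adj_gram[OF assms] by (simp add: mat_transpose_gram_transpose)
  finally show ?thesis .
qed

lemma sum_UNIV_prod:
  "(\<Sum>p\<in>(UNIV :: ('x::finite \<times> 'y::finite) set). f p) = (\<Sum>x\<in>UNIV. \<Sum>y\<in>UNIV. f (x, y))"
  by (subst UNIV_Times_UNIV[symmetric]) (rule sum.cartesian_product')

lemma mat_mul_mat_kron:
  fixes A C :: "'x::finite \<Rightarrow> 'x \<Rightarrow> complex" and B D :: "'y::finite \<Rightarrow> 'y \<Rightarrow> complex"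
  shows "mat_mul (mat_kron A B) (mat_kron C D) = mat_kron (mat_mul A C) (mat_mul B D)"
  by (intro ext) (simp add: mat_mul_def mat_kron_def sum_UNIV_prod sum_product mult_ac)

lemma mpow_mat_kron:
  fixes A :: "'x::finite \<Rightarrow> 'x \<Rightarrow> complex" and B :: "'y::finite \<Rightarrow> 'y \<Rightarrow> complex"
  shows "mpow (mat_kron A B) n = mat_kron (mpow A n) (mpow B n)"
proof (induction n)
  case 0
  show ?case by (intro ext) (auto simp: mat_kron_def mat_one_def prod_eq_iff)
next
  case (Suc n)
  then show ?case by (simp add: mpow_Suc mat_mul_mat_kron)
qed

lemma mtrace_mat_kron:
  fixes A :: "'x::finite \<Rightarrow> 'x \<Rightarrow> complex" and B :: "'y::finite \<Rightarrow> 'y \<Rightarrow> complex"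
  shows "mtrace (mat_kron A B) = mtrace A * mtrace B"
  by (simp add: mtrace_def mat_kron_def sum_UNIV_prod sum_product)

section \<open>Sums over assignments of labels to copies\<close>

lemma sum_PiE_insert:
  fixes F :: "('i \<Rightarrow> 'x::finite) \<Rightarrow> 'c::comm_monoid_add"
  assumes "a \<notin> S"
  shows "(\<Sum>y\<in>PiE (insert a S) (\<lambda>_. UNIV). F y) = (\<Sum>c\<in>UNIV. \<Sum>y\<in>PiE S (\<lambda>_. UNIV). F (y(a := c)))"
proof -
  have "(\<Sum>y\<in>PiE (insert a S) (\<lambda>_. UNIV). F y) = (\<Sum>(c,y)\<in>UNIV \<times> PiE S (\<lambda>_. UNIV). F (y(a := c)))"
    using assms
    by (intro sum.reindex_bij_witness[of _ "\<lambda>(y,g). g(a := y)" "\<lambda>g. (g a, g(a := undefined))"])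
       (auto simp: PiE_def extensional_def)
  then show ?thesis
    by (simp add: sum.cartesian_product)
qed

lemma sum_PiE_bij_reindex:
  assumes g: "bij_betw g J I"
  shows "(\<Sum>x\<in>PiE I (\<lambda>_. UNIV). F (restrict (x \<circ> g) J)) = (\<Sum>z\<in>PiE J (\<lambda>_. UNIV :: 'x set). F z)"
proof (rule sum.reindex_bij_witness[where j = "\<lambda>x. restrict (x \<circ> g) J" and i = "\<lambda>z. restrict (z \<circ> inv_into J g) I"])
  have inv: "inv_into J g l \<in> J" "g (inv_into J g l) = l" if "l \<in> I" for l
    using g that by (auto simp: bij_betw_def inv_into_into f_inv_into_f)
  have ginv: "inv_into J g (g p) = p" if "p \<in> J" for p
    using g that by (simp add: bij_betw_def inv_into_f_f)
  show "restrict (restrict (x \<circ> g) J \<circ> inv_into J g) I = x" if "x \<in> PiE I (\<lambda>_. UNIV)" for x :: "_ \<Rightarrow> 'x"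
    using that inv by (auto simp: fun_eq_iff PiE_def extensional_def)
  show "restrict (restrict (z \<circ> inv_into J g) I \<circ> g) J = z" if "z \<in> PiE J (\<lambda>_. UNIV)" for z :: "_ \<Rightarrow> 'x"
    using that g ginv by (auto simp: fun_eq_iff PiE_def extensional_def bij_betw_def)
qed auto

lemma sum_PiE_Times_prod:
  fixes F :: "('j \<Rightarrow> 'x::finite) \<Rightarrow> 'c::comm_semiring_1"
  assumes "finite K" and "finite N"
  shows "(\<Sum>z\<in>PiE (K \<times> N) (\<lambda>_. UNIV :: 'x set). \<Prod>k\<in>K. F (\<lambda>j\<in>N. z (k, j)))
       = (\<Prod>k\<in>K. \<Sum>y\<in>PiE N (\<lambda>_. UNIV). F y)"
proof -
  have "(\<Prod>k\<in>K. \<Sum>y\<in>PiE N (\<lambda>_. UNIV). F y) = (\<Sum>w\<in>PiE K (\<lambda>_. PiE N (\<lambda>_. UNIV)). \<Prod>k\<in>K. F (w k))"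
    using assms by (intro prod_sum_PiE finite_PiE) auto
  also have "\<dots> = (\<Sum>z\<in>PiE (K \<times> N) (\<lambda>_. UNIV). \<Prod>k\<in>K. F (\<lambda>j\<in>N. z (k, j)))"
    by (rule sum.reindex_bij_witness[where i = "\<lambda>z. \<lambda>k\<in>K. \<lambda>j\<in>N. z (k, j)"
          and j = "\<lambda>w. restrict (case_prod w) (K \<times> N)"])
       (auto simp: fun_eq_iff PiE_def Pi_def extensional_def intro!: prod.cong arg_cong[where f = F])
  finally show ?thesis ..
qed

lemma sum_PiE_path:
  fixes R :: "'x::finite \<Rightarrow> 'x \<Rightarrow> complex"
  shows "(\<Sum>y\<in>PiE {..<Suc k} (\<lambda>_. UNIV). W (y k) (y 0) * (\<Prod>j<k. R (y (Suc j)) (y j)))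
       = (\<Sum>u\<in>UNIV. \<Sum>v\<in>UNIV. W v u * mpow R k v u)"
proof (induction k arbitrary: W)
  case 0
  have "(\<Sum>y\<in>PiE {..<Suc 0} (\<lambda>_. UNIV). W (y 0) (y 0)) = (\<Sum>c\<in>UNIV. W c c)"
    using sum_PiE_insert[of 0 "{}" "\<lambda>y. W (y 0) (y 0)"] by (simp add: lessThan_Suc)
  also have "\<dots> = (\<Sum>u\<in>UNIV. \<Sum>v\<in>UNIV. W v u * mat_one v u)"
    by (simp add: mat_one_def if_distrib sum.delta cong: if_cong)
  finally show ?case by simp
next
  case (Suc k)
  have "(\<Prod>j<k. R ((y(Suc k := c)) (Suc j)) ((y(Suc k := c)) j)) = (\<Prod>j<k. R (y (Suc j)) (y j))" for y c
    by (rule prod.cong) auto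
  then have "(\<Sum>y\<in>PiE {..<Suc (Suc k)} (\<lambda>_. UNIV). W (y (Suc k)) (y 0) * (\<Prod>j<Suc k. R (y (Suc j)) (y j)))
    = (\<Sum>c\<in>UNIV. \<Sum>y\<in>PiE {..<Suc k} (\<lambda>_. UNIV). W c (y 0) * ((\<Prod>j<k. R (y (Suc j)) (y j)) * R c (y k)))"
    using sum_PiE_insert[of "Suc k" "{..<Suc k}" "\<lambda>y. W (y (Suc k)) (y 0) * (\<Prod>j<Suc k. R (y (Suc j)) (y j))"]
    by (simp add: lessThan_Suc[of "Suc k"] prod.lessThan_Suc)
  also have "\<dots> = (\<Sum>y\<in>PiE {..<Suc k} (\<lambda>_. UNIV).
      (\<lambda>v u. \<Sum>c\<in>UNIV. W c u * R c v) (y k) (y 0) * (\<Prod>j<k. R (y (Suc j)) (y j)))"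
    by (subst sum.swap) (simp add: sum_distrib_left sum_distrib_right mult_ac)
  also have "\<dots> = (\<Sum>u\<in>UNIV. \<Sum>v\<in>UNIV. (\<Sum>c\<in>UNIV. W c u * R c v) * mpow R k v u)"
    by (rule Suc.IH)
  also have "\<dots> = (\<Sum>u\<in>UNIV. \<Sum>c\<in>UNIV. W c u * mpow R (Suc k) c u)"
    unfolding mpow_Suc_left mat_mul_def sum_distrib_left sum_distrib_right mult.assoc
    by (rule sum.cong[OF refl]) (rule sum.swap)
  finally show ?case .
qed

lemma sum_PiE_cycle:
  fixes R :: "'x::finite \<Rightarrow> 'x \<Rightarrow> complex"
  assumes "n > 0"
  shows "(\<Sum>y\<in>PiE {..<n} (\<lambda>_. UNIV). \<Prod>j<n. R (y (Suc j mod n)) (y j)) = mtrace (mpow R n)"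
proof -
  obtain k where n: "n = Suc k" using assms by (cases n) auto
  have "(\<Prod>j<Suc k. R (y (Suc j mod Suc k)) (y j)) = R (y 0) (y k) * (\<Prod>j<k. R (y (Suc j)) (y j))" for y
    by (simp add: prod.lessThan_Suc mult.commute)
  then have "(\<Sum>y\<in>PiE {..<n} (\<lambda>_. UNIV). \<Prod>j<n. R (y (Suc j mod n)) (y j))
     = (\<Sum>y\<in>PiE {..<Suc k} (\<lambda>_. UNIV). R (y 0) (y k) * (\<Prod>j<k. R (y (Suc j)) (y j)))"
    by (simp only: n)
  also have "\<dots> = (\<Sum>u\<in>UNIV. \<Sum>v\<in>UNIV. R u v * mpow R k v u)"
    by (rule sum_PiE_path[of "\<lambda>v u. R u v", simplified])
  also have "\<dots> = mtrace (mpow R n)"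
    by (simp add: n mtrace_def mpow_Suc_left mat_mul_def)
  finally show ?thesis .
qed

lemma sum_PiE_prod_cycles:
  fixes R :: "'x::finite \<Rightarrow> 'x \<Rightarrow> complex" and g :: "'k \<times> nat \<Rightarrow> 'i"
  assumes K: "finite K" and g: "bij_betw g (K \<times> {..<n}) I" and n: "n > 0"
    and cyc: "\<And>k j. k \<in> K \<Longrightarrow> j < n \<Longrightarrow> \<pi> (g (k, j)) = g (k, Suc j mod n)"
  shows "(\<Sum>x\<in>PiE I (\<lambda>_. UNIV). \<Prod>l\<in>I. R (x (\<pi> l)) (x l)) = mtrace (mpow R n) ^ card K"
proof -
  let ?J = "K \<times> {..<n}"
  define C where "C y = (\<Prod>j<n. R (y (Suc j mod n)) (y j))" for y :: "nat \<Rightarrow> 'x"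
  have "(\<Prod>l\<in>I. R (x (\<pi> l)) (x l)) = (\<Prod>k\<in>K. C (\<lambda>j\<in>{..<n}. restrict (x \<circ> g) ?J (k, j)))" for x
  proof -
    have "(\<Prod>l\<in>I. R (x (\<pi> l)) (x l)) = (\<Prod>p\<in>?J. R (x (\<pi> (g p))) (x (g p)))"
      by (rule prod.reindex_bij_betw[OF g, symmetric])
    also have "\<dots> = (\<Prod>k\<in>K. \<Prod>j<n. R (x (g (k, Suc j mod n))) (x (g (k, j))))"
      by (simp add: prod.cartesian_product case_prod_unfold) (rule prod.cong, auto simp: cyc)
    also have "\<dots> = (\<Prod>k\<in>K. C (\<lambda>j\<in>{..<n}. restrict (x \<circ> g) ?J (k, j)))"
      using n by (auto simp: C_def intro!: prod.cong)
    finally show ?thesis .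
  qed
  then have "(\<Sum>x\<in>PiE I (\<lambda>_. UNIV). \<Prod>l\<in>I. R (x (\<pi> l)) (x l))
      = (\<Sum>z\<in>PiE ?J (\<lambda>_. UNIV). \<Prod>k\<in>K. C (\<lambda>j\<in>{..<n}. z (k, j)))"
    using sum_PiE_bij_reindex[OF g, of "\<lambda>z. \<Prod>k\<in>K. C (\<lambda>j\<in>{..<n}. z (k, j))"] by simp
  also have "\<dots> = (\<Prod>k\<in>K. \<Sum>y\<in>PiE {..<n} (\<lambda>_. UNIV). C y)"
    using K by (intro sum_PiE_Times_prod) auto
  also have "\<dots> = mtrace (mpow R n) ^ card K"
    using sum_PiE_cycle[OF n, of R] by (simp add: C_def)
  finally show ?thesis .
qed

section \<open>Permutation expectations in a bipartite state\<close>

definition bip_perm_expect ::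
  "('x::finite \<Rightarrow> 'y::finite \<Rightarrow> complex) \<Rightarrow> nat \<Rightarrow> (nat \<Rightarrow> nat) \<Rightarrow> (nat \<Rightarrow> nat) \<Rightarrow> complex" where
  "bip_perm_expect \<psi> N \<sigma> \<tau> = (\<Sum>x\<in>PiE {1..N} (\<lambda>_. UNIV). \<Sum>y\<in>PiE {1..N} (\<lambda>_. UNIV).
      (\<Prod>i\<in>{1..N}. cnj (\<psi> (x i) (y i))) * (\<Prod>i\<in>{1..N}. \<psi> (x (\<sigma> i)) (y (\<tau> i))))"

lemma bip_perm_expect_cong:
  assumes "\<And>i. i \<in> {1..N} \<Longrightarrow> \<sigma> i = \<sigma>' i" and "\<And>i. i \<in> {1..N} \<Longrightarrow> \<tau> i = \<tau>' i"
  shows "bip_perm_expect \<psi> N \<sigma> \<tau> = bip_perm_expect \<psi> N \<sigma>' \<tau>'"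
  unfolding bip_perm_expect_def by (intro sum.cong refl arg_cong2[where f = "(*)"] prod.cong) (simp_all add: assms)

text \<open>Summing out the second factor leaves a product of entries of \<open>\<psi>\<psi>\<^sup>*\<close> along the
  permutation \<open>\<pi> = \<sigma> \<circ> \<tau>\<inverse>\<close>.\<close>
lemma bip_perm_expect_gram:
  fixes \<psi> :: "'x::finite \<Rightarrow> 'y::finite \<Rightarrow> complex"
  assumes \<tau>: "bij_betw \<tau> {1..N} {1..N}" and \<pi>: "\<And>i. i \<in> {1..N} \<Longrightarrow> \<pi> (\<tau> i) = \<sigma> i"
  shows "bip_perm_expect \<psi> N \<sigma> \<tau> = (\<Sum>x\<in>PiE {1..N} (\<lambda>_. UNIV). \<Prod>l\<in>{1..N}. gram \<psi> (x (\<pi> l)) (x l))"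
  unfolding bip_perm_expect_def
proof (rule sum.cong[OF refl])
  fix x :: "nat \<Rightarrow> 'x"
  have "(\<Prod>i\<in>{1..N}. \<psi> (x (\<sigma> i)) (y (\<tau> i))) = (\<Prod>i\<in>{1..N}. \<psi> (x (\<pi> i)) (y i))" for y
  proof -
    have "(\<Prod>i\<in>{1..N}. \<psi> (x (\<sigma> i)) (y (\<tau> i))) = (\<Prod>i\<in>{1..N}. \<psi> (x (\<pi> (\<tau> i))) (y (\<tau> i)))"
      by (rule prod.cong) (auto simp: \<pi>)
    also have "\<dots> = (\<Prod>i\<in>{1..N}. \<psi> (x (\<pi> i)) (y i))"
      by (rule prod.reindex_bij_betw[OF \<tau>])
    finally show ?thesis .
  qed
  then have "(\<Sum>y\<in>PiE {1..N} (\<lambda>_. UNIV). (\<Prod>i\<in>{1..N}. cnj (\<psi> (x i) (y i))) * (\<Prod>i\<in>{1..N}. \<psi> (x (\<sigma> i)) (y (\<tau> i))))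
     = (\<Sum>y\<in>PiE {1..N} (\<lambda>_. UNIV). \<Prod>i\<in>{1..N}. \<psi> (x (\<pi> i)) (y i) * cnj (\<psi> (x i) (y i)))"
    by (simp add: prod.distrib mult.commute)
  also have "\<dots> = (\<Prod>i\<in>{1..N}. \<Sum>v\<in>UNIV. \<psi> (x (\<pi> i)) v * cnj (\<psi> (x i) v))"
    by (rule prod_sum_PiE[symmetric]) auto
  finally show "(\<Sum>y\<in>PiE {1..N} (\<lambda>_. UNIV). (\<Prod>i\<in>{1..N}. cnj (\<psi> (x i) (y i))) * (\<Prod>i\<in>{1..N}. \<psi> (x (\<sigma> i)) (y (\<tau> i))))
     = (\<Prod>l\<in>{1..N}. gram \<psi> (x (\<pi> l)) (x l))"
    by (simp add: mat_mul_def mat_adj_def)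
qed

lemma bip_perm_expect_cycles:
  fixes \<psi> :: "'x::finite \<Rightarrow> 'y::finite \<Rightarrow> complex" and g :: "'k \<times> nat \<Rightarrow> nat"
  assumes \<tau>: "bij_betw \<tau> {1..N} {1..N}" and \<pi>: "\<And>i. i \<in> {1..N} \<Longrightarrow> \<pi> (\<tau> i) = \<sigma> i"
    and K: "finite K" and g: "bij_betw g (K \<times> {..<n}) {1..N}" and n: "n > 0"
    and cyc: "\<And>k j. k \<in> K \<Longrightarrow> j < n \<Longrightarrow> \<pi> (g (k, j)) = g (k, Suc j mod n)"
  shows "bip_perm_expect \<psi> N \<sigma> \<tau> = mtrace (mpow (gram \<psi>) n) ^ card K"
  using sum_PiE_prod_cycles[OF K g n cyc] bip_perm_expect_gram[of \<tau> N \<pi> \<sigma> \<psi>] \<tau> \<pi> by simp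

section \<open>The row and column cycles\<close>

definition grid_pos :: "nat \<Rightarrow> nat \<times> nat \<Rightarrow> nat" where
  "grid_pos n p = fst p * n + snd p + 1"

definition grid_coords :: "nat \<Rightarrow> nat \<Rightarrow> nat \<times> nat" where
  "grid_coords n i = ((i - 1) div n, (i - 1) mod n)"

lemma grid_pos_in: assumes "r < n" "c < n" shows "grid_pos n (r, c) \<in> {1..n^2}"
proof -
  have "r * n + c < Suc r * n" using assms by simp
  also have "\<dots> \<le> n * n" using assms by (intro mult_le_mono1) simp
  finally show ?thesis by (simp add: grid_pos_def power2_eq_square)
qed

lemma grid_coords_pos: assumes "c < n" shows "grid_coords n (grid_pos n (r, c)) = (r, c)"
  using assms by (simp add: grid_pos_def grid_coords_def)

lemma grid_pos_coords:
  assumes "i \<in> {1..n^2}"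
  shows "grid_pos n (grid_coords n i) = i" and "grid_coords n i \<in> {..<n} \<times> {..<n}"
proof -
  have "1 \<le> i" "i - 1 < n * n" using assms by (auto simp: power2_eq_square)
  then have "n > 0" by (cases n) auto
  with \<open>1 \<le> i\<close> \<open>i - 1 < n * n\<close> show "grid_pos n (grid_coords n i) = i" "grid_coords n i \<in> {..<n} \<times> {..<n}"
    by (auto simp: grid_pos_def grid_coords_def less_mult_imp_div_less)
qed

lemma grid_pos_cases:
  assumes "i \<in> {1..n^2}"
  obtains r c where "r < n" "c < n" "i = grid_pos n (r, c)"
  using grid_pos_coords[OF assms] by (metis mem_Times_iff lessThan_iff prod.collapse)

lemma bij_betw_grid_pos: "bij_betw (grid_pos n) ({..<n} \<times> {..<n}) {1..n^2}"
proof (rule bij_betw_byWitness[where f' = "grid_coords n"])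
  show "grid_pos n ` ({..<n} \<times> {..<n}) \<subseteq> {1..n^2}"
    using grid_pos_in by blast
  show "grid_coords n ` {1..n^2} \<subseteq> {..<n} \<times> {..<n}"
    using grid_pos_coords(2) by blast
qed (auto simp: grid_coords_pos grid_pos_coords(1) simp del: atLeastAtMost_iff)

lemma row_cycle_grid_pos:
  assumes "r < n" "c < n" shows "row_cycle n (grid_pos n (r, c)) = grid_pos n (r, Suc c mod n)"
  using grid_pos_in[OF assms] assms by (simp add: row_cycle_def grid_pos_def)

lemma col_cycle_grid_pos:
  assumes "r < n" "c < n" shows "col_cycle n (grid_pos n (r, c)) = grid_pos n (Suc r mod n, c)"
  using grid_pos_in[OF assms] assms by (simp add: col_cycle_def grid_pos_def)

lemma row_cycle_in: assumes "i \<in> {1..n^2}" shows "row_cycle n i \<in> {1..n^2}"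
  using assms
proof (cases rule: grid_pos_cases)
  case (1 r c)
  then show ?thesis using grid_pos_in[of r n "Suc c mod n"] by (simp add: row_cycle_grid_pos)
qed

lemma col_cycle_in: assumes "i \<in> {1..n^2}" shows "col_cycle n i \<in> {1..n^2}"
  using assms
proof (cases rule: grid_pos_cases)
  case (1 r c)
  then show ?thesis using grid_pos_in[of "Suc r mod n" n c] by (simp add: col_cycle_grid_pos)
qed

definition col_cycle_inv :: "nat \<Rightarrow> nat \<Rightarrow> nat" where
  "col_cycle_inv n i = grid_pos n ((fst (grid_coords n i) + n - 1) mod n, snd (grid_coords n i))"

lemma col_cycle_inv_grid_pos:
  assumes "c < n" shows "col_cycle_inv n (grid_pos n (r, c)) = grid_pos n ((r + n - 1) mod n, c)"
  using assms by (simp add: col_cycle_inv_def grid_coords_pos)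

lemma mod_Suc_pred: assumes "r < n" shows "(Suc r mod n + n - 1) mod n = r"
proof -
  have "(Suc r mod n + n - 1) mod n = (Suc r mod n + (n - 1)) mod n"
    using assms by simp
  also have "\<dots> = (Suc r + (n - 1)) mod n"
    by (simp add: mod_add_left_eq)
  also have "Suc r + (n - 1) = r + n" using assms by simp
  finally show ?thesis using assms by simp
qed

lemma Suc_mod_pred: assumes "r < n" shows "Suc ((r + n - 1) mod n) mod n = r"
proof -
  have "Suc ((r + n - 1) mod n) mod n = Suc (r + n - 1) mod n" by (simp add: mod_Suc_eq)
  also have "Suc (r + n - 1) = r + n" using assms by simp
  finally show ?thesis using assms by simp
qed

lemma col_cycle_inv_col_cycle:
  assumes "i \<in> {1..n^2}" shows "col_cycle_inv n (col_cycle n i) = i"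
  using assms
proof (cases rule: grid_pos_cases)
  case (1 r c)
  then show ?thesis using mod_Suc_pred[of r n] by (simp add: col_cycle_grid_pos col_cycle_inv_grid_pos)
qed

lemma bij_betw_col_cycle: "bij_betw (col_cycle n) {1..n^2} {1..n^2}"
proof (rule bij_betw_byWitness[where f' = "col_cycle_inv n"])
  have inv: "col_cycle_inv n i \<in> {1..n^2} \<and> col_cycle n (col_cycle_inv n i) = i" if "i \<in> {1..n^2}" for i
    using that
  proof (cases rule: grid_pos_cases)
    case (1 r c)
    then have "(r + n - 1) mod n < n" by simp
    with 1 show ?thesis
      using Suc_mod_pred[of r n] grid_pos_in[of "(r + n - 1) mod n" n c]
      by (simp add: col_cycle_grid_pos col_cycle_inv_grid_pos)
  qed
  then show "\<forall>i\<in>{1..n^2}. col_cycle n (col_cycle_inv n i) = i"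
    and "col_cycle_inv n ` {1..n^2} \<subseteq> {1..n^2}"
    by blast+
  show "\<forall>i\<in>{1..n^2}. col_cycle_inv n (col_cycle n i) = i"
    by (simp add: col_cycle_inv_col_cycle)
  show "col_cycle n ` {1..n^2} \<subseteq> {1..n^2}"
    using col_cycle_in by blast
qed

lemma bip_perm_expect_row_cycle:
  fixes \<psi> :: "'x::finite \<Rightarrow> 'y::finite \<Rightarrow> complex"
  assumes n: "n > 0" and \<tau>: "bij_betw \<tau> {1..n^2} {1..n^2}"
    and \<sigma>: "\<And>i. i \<in> {1..n^2} \<Longrightarrow> row_cycle n (\<tau> i) = \<sigma> i"
  shows "bip_perm_expect \<psi> (n^2) \<sigma> \<tau> = mtrace (mpow (gram \<psi>) n) ^ n"
  using bip_perm_expect_cycles[where \<pi> = "row_cycle n" and K = "{..<n}" and g = "grid_pos n", OF \<tau> \<sigma>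
      _ bij_betw_grid_pos n]
  by (simp add: row_cycle_grid_pos)

lemma bip_perm_expect_col_cycle:
  fixes \<psi> :: "'x::finite \<Rightarrow> 'y::finite \<Rightarrow> complex"
  assumes n: "n > 0" and \<tau>: "bij_betw \<tau> {1..n^2} {1..n^2}"
    and \<sigma>: "\<And>i. i \<in> {1..n^2} \<Longrightarrow> col_cycle n (\<tau> i) = \<sigma> i"
  shows "bip_perm_expect \<psi> (n^2) \<sigma> \<tau> = mtrace (mpow (gram \<psi>) n) ^ n"
proof -
  have "bij_betw (grid_pos n \<circ> prod.swap) ({..<n} \<times> {..<n}) {1..n^2}"
    by (rule bij_betw_trans[OF _ bij_betw_grid_pos]) (simp add: bij_betw_def product_swap)
  from bip_perm_expect_cycles[where \<pi> = "col_cycle n" and K = "{..<n}", OF \<tau> \<sigma> _ this n]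
  show ?thesis by (simp add: col_cycle_grid_pos)
qed

definition antidiag_cell :: "nat \<Rightarrow> nat \<times> nat \<Rightarrow> nat \<times> nat" where
  "antidiag_cell n p = ((fst p + (n - 1) * snd p) mod n, snd p)"

lemma bij_betw_antidiag_cell:
  assumes n: "n > 0"
  shows "bij_betw (antidiag_cell n) ({..<n} \<times> {..<n}) ({..<n} \<times> {..<n})"
proof (rule bij_betw_byWitness[where f' = "\<lambda>(r, c). ((r + c) mod n, c)"])
  have nj: "(n - 1) * j + j = n * j" "j + (n - 1) * j = n * j" for j
    using n by (metis Suc_diff_1 add.commute mult_Suc)+
  show "\<forall>p\<in>{..<n} \<times> {..<n}. (\<lambda>(r, c). ((r + c) mod n, c)) (antidiag_cell n p) = p"
  proof
    fix p assume "p \<in> {..<n} \<times> {..<n}"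
    then obtain k j where kj: "p = (k, j)" "k < n" by auto
    have "((k + (n - 1) * j) mod n + j) mod n = (k + ((n - 1) * j + j)) mod n"
      by (simp add: mod_add_left_eq add.assoc)
    also have "\<dots> = k" using kj nj by simp
    finally show "(\<lambda>(r, c). ((r + c) mod n, c)) (antidiag_cell n p) = p"
      by (simp add: antidiag_cell_def kj)
  qed
  show "\<forall>p\<in>{..<n} \<times> {..<n}. antidiag_cell n ((\<lambda>(r, c). ((r + c) mod n, c)) p) = p"
  proof
    fix p assume "p \<in> {..<n} \<times> {..<n}"
    then obtain r c where rc: "p = (r, c)" "r < n" by auto
    have "((r + c) mod n + (n - 1) * c) mod n = (r + (c + (n - 1) * c)) mod n"
      by (simp add: mod_add_left_eq add.assoc)
    also have "\<dots> = r" using rc nj by simp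
    finally show "antidiag_cell n ((\<lambda>(r, c). ((r + c) mod n, c)) p) = p"
      by (simp add: antidiag_cell_def rc)
  qed
qed (use n in \<open>auto simp: antidiag_cell_def\<close>)

lemma antidiag_cell_step:
  assumes "n > 0"
  shows "(fst (antidiag_cell n (k, j)) + n - 1) mod n = fst (antidiag_cell n (k, Suc j mod n))"
proof -
  have "((k + (n - 1) * j) mod n + n - 1) mod n = ((k + (n - 1) * j) mod n + (n - 1)) mod n"
    using assms by simp
  also have "\<dots> = (k + (n - 1) * j + (n - 1)) mod n"
    by (simp add: mod_add_left_eq)
  also have "\<dots> = (k + (n - 1) * Suc j) mod n"
    by (simp add: mult_Suc_right add.commute add.left_commute)
  also have "\<dots> = (k + (n - 1) * (Suc j mod n)) mod n"
    by (metis mod_add_right_eq mod_mult_right_eq)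
  finally show ?thesis by (simp add: antidiag_cell_def)
qed

text \<open>Here \<open>\<pi> = \<pi>\<^sup>(\<^sup>1\<^sup>) \<circ> (\<pi>\<^sup>(\<^sup>2\<^sup>))\<inverse>\<close> moves the cell \<open>(r, c)\<close> to \<open>(r - 1, c + 1)\<close>, so its cycles are
  the \<open>n\<close> anti-diagonals \<open>r + c \<equiv> k (mod n)\<close>, each run through by \<open>j \<mapsto> (k - j, j)\<close>.\<close>
lemma bip_perm_expect_row_col_cycle:
  fixes \<psi> :: "'x::finite \<Rightarrow> 'y::finite \<Rightarrow> complex"
  assumes n: "n > 0"
  shows "bip_perm_expect \<psi> (n^2) (row_cycle n) (col_cycle n) = mtrace (mpow (gram \<psi>) n) ^ n"
proof -
  have g: "bij_betw (grid_pos n \<circ> antidiag_cell n) ({..<n} \<times> {..<n}) {1..n^2}"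
    by (rule bij_betw_trans[OF bij_betw_antidiag_cell[OF n] bij_betw_grid_pos])
  have cyc: "row_cycle n (col_cycle_inv n (grid_pos n (antidiag_cell n (k, j))))
      = grid_pos n (antidiag_cell n (k, Suc j mod n))" if "j < n" for k j
    using that n antidiag_cell_step[OF n, of k j]
    by (simp add: antidiag_cell_def col_cycle_inv_grid_pos row_cycle_grid_pos)
  have "bip_perm_expect \<psi> (n^2) (row_cycle n) (col_cycle n) = mtrace (mpow (gram \<psi>) n) ^ card {..<n}"
    by (rule bip_perm_expect_cycles[where \<pi> = "\<lambda>i. row_cycle n (col_cycle_inv n i)",
          OF bij_betw_col_cycle _ _ g n])
       (use col_cycle_inv_col_cycle cyc in simp_all)
  then show ?thesis by simp
qed

section \<open>The tripartite state\<close>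

lemma sum_PiE_pairs:
  fixes F :: "('i \<Rightarrow> 'p::finite \<times> 'q::finite) \<Rightarrow> 'c::comm_monoid_add"
  shows "(\<Sum>a\<in>PiE I (\<lambda>_. UNIV). F a)
       = (\<Sum>a1\<in>PiE I (\<lambda>_. UNIV). \<Sum>a2\<in>PiE I (\<lambda>_. UNIV). F (\<lambda>i\<in>I. (a1 i, a2 i)))"
proof -
  have "(\<Sum>a\<in>PiE I (\<lambda>_. UNIV). F a)
      = (\<Sum>(a1, a2)\<in>PiE I (\<lambda>_. UNIV) \<times> PiE I (\<lambda>_. UNIV). F (\<lambda>i\<in>I. (a1 i, a2 i)))"
    by (rule sum.reindex_bij_witness[where i = "\<lambda>(a1, a2). \<lambda>i\<in>I. (a1 i, a2 i)"
          and j = "\<lambda>a. (restrict (fst \<circ> a) I, restrict (snd \<circ> a) I)"])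
       (auto simp: PiE_def extensional_def fun_eq_iff intro!: arg_cong[where f = F])
  then show ?thesis
    by (simp add: sum.cartesian_product)
qed

lemma sum_nested4_mult:
  fixes f h :: "_ \<Rightarrow> 'c::comm_semiring_1"
  shows "(\<Sum>a\<in>A. \<Sum>b\<in>B. \<Sum>c\<in>C. \<Sum>d\<in>D. f a * g b c * h d)
       = (\<Sum>a\<in>A. f a) * (\<Sum>b\<in>B. \<Sum>c\<in>C. g b c) * (\<Sum>d\<in>D. h d)"
  unfolding mult.assoc sum_distrib_right by (unfold sum_distrib_left) (rule refl)

lemma sum_nested6_mult:
  fixes f g h :: "_ \<Rightarrow> _ \<Rightarrow> 'c::comm_semiring_1"
  shows "(\<Sum>a1\<in>A1. \<Sum>a2\<in>A2. \<Sum>b1\<in>B1. \<Sum>b2\<in>B2. \<Sum>c1\<in>C1. \<Sum>c2\<in>C2. f a1 b1 * g a2 c1 * h b2 c2)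
   = (\<Sum>a1\<in>A1. \<Sum>b1\<in>B1. f a1 b1) * (\<Sum>a2\<in>A2. \<Sum>c1\<in>C1. g a2 c1) * (\<Sum>b2\<in>B2. \<Sum>c2\<in>C2. h b2 c2)"
proof -
  have "(\<Sum>a1\<in>A1. \<Sum>a2\<in>A2. \<Sum>b1\<in>B1. \<Sum>b2\<in>B2. \<Sum>c1\<in>C1. \<Sum>c2\<in>C2. f a1 b1 * g a2 c1 * h b2 c2)
     = (\<Sum>a1\<in>A1. \<Sum>b1\<in>B1. \<Sum>a2\<in>A2. \<Sum>b2\<in>B2. \<Sum>c1\<in>C1. \<Sum>c2\<in>C2. f a1 b1 * g a2 c1 * h b2 c2)"
    by (intro sum.cong refl) (rule sum.swap)
  also have "\<dots> = (\<Sum>a1\<in>A1. \<Sum>b1\<in>B1. \<Sum>a2\<in>A2. \<Sum>c1\<in>C1. \<Sum>b2\<in>B2. \<Sum>c2\<in>C2. f a1 b1 * g a2 c1 * h b2 c2)"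
    by (intro sum.cong refl) (rule sum.swap)
  also have "\<dots> = (\<Sum>a1\<in>A1. \<Sum>b1\<in>B1. f a1 b1) * (\<Sum>a2\<in>A2. \<Sum>c1\<in>C1. g a2 c1) * (\<Sum>b2\<in>B2. \<Sum>c2\<in>C2. h b2 c2)"
    unfolding mult.assoc sum_distrib_right by (unfold sum_distrib_left) (rule refl)
  finally show ?thesis .
qed

lemma perm_expect_tri_state:
  fixes \<psi>1 :: "'a1::finite \<Rightarrow> 'b1::finite \<Rightarrow> complex"
    and \<psi>2 :: "'a2::finite \<Rightarrow> 'c1::finite \<Rightarrow> complex"
    and \<psi>3 :: "'b2::finite \<Rightarrow> 'c2::finite \<Rightarrow> complex"
  assumes "\<sigma>A ` {1..N} \<subseteq> {1..N}" and "\<sigma>B ` {1..N} \<subseteq> {1..N}" and "\<sigma>C ` {1..N} \<subseteq> {1..N}"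
  shows "perm_expect (tri_state \<psi>1 \<psi>2 \<psi>3) N \<sigma>A \<sigma>B \<sigma>C
       = bip_perm_expect \<psi>1 N \<sigma>A \<sigma>B * bip_perm_expect \<psi>2 N \<sigma>A \<sigma>C * bip_perm_expect \<psi>3 N \<sigma>B \<sigma>C"
proof -
  let ?I = "{1..N}"
  define X where "X a1 b1 = (\<Prod>i\<in>?I. cnj (\<psi>1 (a1 i) (b1 i))) * (\<Prod>i\<in>?I. \<psi>1 (a1 (\<sigma>A i)) (b1 (\<sigma>B i)))" for a1 b1
  define Y where "Y a2 c1 = (\<Prod>i\<in>?I. cnj (\<psi>2 (a2 i) (c1 i))) * (\<Prod>i\<in>?I. \<psi>2 (a2 (\<sigma>A i)) (c1 (\<sigma>C i)))" for a2 c1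
  define Z where "Z b2 c2 = (\<Prod>i\<in>?I. cnj (\<psi>3 (b2 i) (c2 i))) * (\<Prod>i\<in>?I. \<psi>3 (b2 (\<sigma>B i)) (c2 (\<sigma>C i)))" for b2 c2
  have "(\<Prod>i\<in>?I. cnj (tri_state \<psi>1 \<psi>2 \<psi>3 ((\<lambda>i\<in>?I. (a1 i, a2 i)) i) ((\<lambda>i\<in>?I. (b1 i, b2 i)) i) ((\<lambda>i\<in>?I. (c1 i, c2 i)) i))) *
      (\<Prod>i\<in>?I. tri_state \<psi>1 \<psi>2 \<psi>3 ((\<lambda>i\<in>?I. (a1 i, a2 i)) (\<sigma>A i)) ((\<lambda>i\<in>?I. (b1 i, b2 i)) (\<sigma>B i)) ((\<lambda>i\<in>?I. (c1 i, c2 i)) (\<sigma>C i)))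
      = X a1 b1 * Y a2 c1 * Z b2 c2" for a1 a2 b1 b2 c1 c2
  proof -
    have "(\<Prod>i\<in>?I. cnj (tri_state \<psi>1 \<psi>2 \<psi>3 ((\<lambda>i\<in>?I. (a1 i, a2 i)) i) ((\<lambda>i\<in>?I. (b1 i, b2 i)) i) ((\<lambda>i\<in>?I. (c1 i, c2 i)) i)))
        = (\<Prod>i\<in>?I. cnj (\<psi>1 (a1 i) (b1 i))) * (\<Prod>i\<in>?I. cnj (\<psi>2 (a2 i) (c1 i))) * (\<Prod>i\<in>?I. cnj (\<psi>3 (b2 i) (c2 i)))"
      unfolding prod.distrib[symmetric] by (rule prod.cong) (auto simp: tri_state_def)
    moreover have "(\<Prod>i\<in>?I. tri_state \<psi>1 \<psi>2 \<psi>3 ((\<lambda>i\<in>?I. (a1 i, a2 i)) (\<sigma>A i)) ((\<lambda>i\<in>?I. (b1 i, b2 i)) (\<sigma>B i)) ((\<lambda>i\<in>?I. (c1 i, c2 i)) (\<sigma>C i)))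
        = (\<Prod>i\<in>?I. \<psi>1 (a1 (\<sigma>A i)) (b1 (\<sigma>B i))) * (\<Prod>i\<in>?I. \<psi>2 (a2 (\<sigma>A i)) (c1 (\<sigma>C i)))
          * (\<Prod>i\<in>?I. \<psi>3 (b2 (\<sigma>B i)) (c2 (\<sigma>C i)))"
      unfolding prod.distrib[symmetric] using assms by (intro prod.cong) (auto simp: tri_state_def image_subset_iff)
    ultimately show ?thesis
      by (simp add: X_def Y_def Z_def mult_ac)
  qed
  then have "perm_expect (tri_state \<psi>1 \<psi>2 \<psi>3) N \<sigma>A \<sigma>B \<sigma>C =
     (\<Sum>a1\<in>PiE ?I (\<lambda>_. UNIV). \<Sum>a2\<in>PiE ?I (\<lambda>_. UNIV). \<Sum>b1\<in>PiE ?I (\<lambda>_. UNIV). \<Sum>b2\<in>PiE ?I (\<lambda>_. UNIV).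
      \<Sum>c1\<in>PiE ?I (\<lambda>_. UNIV). \<Sum>c2\<in>PiE ?I (\<lambda>_. UNIV). X a1 b1 * Y a2 c1 * Z b2 c2)"
    unfolding perm_expect_def by (simp only: sum_PiE_pairs)
  also have "\<dots> = bip_perm_expect \<psi>1 N \<sigma>A \<sigma>B * bip_perm_expect \<psi>2 N \<sigma>A \<sigma>C * bip_perm_expect \<psi>3 N \<sigma>B \<sigma>C"
    unfolding sum_nested6_mult by (simp add: bip_perm_expect_def X_def Y_def Z_def)
  finally show ?thesis .
qed

lemma Zn_tri_state:
  fixes \<psi>1 :: "'a1::finite \<Rightarrow> 'b1::finite \<Rightarrow> complex"
    and \<psi>2 :: "'a2::finite \<Rightarrow> 'c1::finite \<Rightarrow> complex"
    and \<psi>3 :: "'b2::finite \<Rightarrow> 'c2::finite \<Rightarrow> complex"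
  assumes n: "n > 0"
  shows "Zn n (tri_state \<psi>1 \<psi>2 \<psi>3)
       = (mtrace (mpow (gram \<psi>1) n) * mtrace (mpow (gram \<psi>2) n) * mtrace (mpow (gram \<psi>3) n)) ^ n"
proof -
  have "Zn n (tri_state \<psi>1 \<psi>2 \<psi>3) = bip_perm_expect \<psi>1 (n^2) (row_cycle n) (col_cycle n)
      * bip_perm_expect \<psi>2 (n^2) (row_cycle n) id * bip_perm_expect \<psi>3 (n^2) (col_cycle n) id"
    unfolding Zn_def by (intro perm_expect_tri_state image_subsetI row_cycle_in col_cycle_in) simp_all
  then show ?thesis
    by (simp add: bip_perm_expect_row_col_cycle[OF n] bip_perm_expect_row_cycle[OF n bij_betw_id]
        bip_perm_expect_col_cycle[OF n bij_betw_id] power_mult_distrib)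
qed

text \<open>Relative to \<open>(14)(23)\<close> on \<open>C\<close>, the permutations \<open>(12)(34)\<close> on \<open>A\<close> and \<open>(13)(24)\<close> on \<open>B\<close>
  are \<open>\<pi>\<^sup>(\<^sup>2\<^sup>)\<close> and \<open>\<pi>\<^sup>(\<^sup>1\<^sup>)\<close> for \<open>n = 2\<close>, so every pair again sees two 2-cycles.\<close>
lemma perm_expect_G_tri_state:
  fixes \<psi>1 :: "'a1::finite \<Rightarrow> 'b1::finite \<Rightarrow> complex"
    and \<psi>2 :: "'a2::finite \<Rightarrow> 'c1::finite \<Rightarrow> complex"
    and \<psi>3 :: "'b2::finite \<Rightarrow> 'c2::finite \<Rightarrow> complex"
  shows "perm_expect (tri_state \<psi>1 \<psi>2 \<psi>3) 4 permGA permGB permGC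
       = (mtrace (mpow (gram \<psi>1) 2) * mtrace (mpow (gram \<psi>2) 2) * mtrace (mpow (gram \<psi>3) 2)) ^ 2"
proof -
  have I: "{1..2^2::nat} = {1, 2, 3, 4}" by auto
  have C: "bij_betw permGC {1..2^2} {1..2^2}"
    by (rule bij_betw_byWitness[where f' = permGC]) (auto simp: I permGC_def)
  have "perm_expect (tri_state \<psi>1 \<psi>2 \<psi>3) (2^2) permGA permGB permGC
      = bip_perm_expect \<psi>1 (2^2) permGA permGB * bip_perm_expect \<psi>2 (2^2) permGA permGC
        * bip_perm_expect \<psi>3 (2^2) permGB permGC"
    by (rule perm_expect_tri_state) (unfold I, auto simp: permGA_def permGB_def permGC_def)
  also have "bip_perm_expect \<psi>1 (2^2) permGA permGB = bip_perm_expect \<psi>1 (2^2) (row_cycle 2) (col_cycle 2)"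
    by (rule bip_perm_expect_cong) (unfold I, auto simp: permGA_def permGB_def row_cycle_def col_cycle_def)
  also have "bip_perm_expect \<psi>2 (2^2) permGA permGC = mtrace (mpow (gram \<psi>2) 2) ^ 2"
    by (rule bip_perm_expect_col_cycle[OF _ C]) (simp, unfold I, auto simp: permGA_def permGC_def col_cycle_def)
  also have "bip_perm_expect \<psi>3 (2^2) permGB permGC = mtrace (mpow (gram \<psi>3) 2) ^ 2"
    by (rule bip_perm_expect_row_cycle[OF _ C]) (simp, unfold I, auto simp: permGB_def permGC_def row_cycle_def)
  finally show ?thesis
    using bip_perm_expect_row_col_cycle[of 2 \<psi>1] by (simp add: power_mult_distrib)
qed

context
  fixes \<psi>1 :: "'a1::finite \<Rightarrow> 'b1::finite \<Rightarrow> complex"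
    and \<psi>2 :: "'a2::finite \<Rightarrow> 'c1::finite \<Rightarrow> complex"
    and \<psi>3 :: "'b2::finite \<Rightarrow> 'c2::finite \<Rightarrow> complex"
begin

lemma rhoA_tri_state:
  "rhoA (tri_state \<psi>1 \<psi>2 \<psi>3) p q = mat_kron (gram \<psi>1) (gram \<psi>2) p q * mtrace (gram \<psi>3)"
proof -
  have "rhoA (tri_state \<psi>1 \<psi>2 \<psi>3) p q = (\<Sum>b1\<in>UNIV. \<Sum>b2\<in>UNIV. \<Sum>c1\<in>UNIV. \<Sum>c2\<in>UNIV.
      (\<psi>1 (fst p) b1 * cnj (\<psi>1 (fst q) b1)) * (\<psi>3 b2 c2 * cnj (\<psi>3 b2 c2)) * (\<psi>2 (snd p) c1 * cnj (\<psi>2 (snd q) c1)))"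
    unfolding rhoA_def sum_UNIV_prod tri_state_def by (simp add: mult_ac)
  also have "\<dots> = (\<Sum>b1\<in>UNIV. \<Sum>b2\<in>UNIV. \<Sum>c2\<in>UNIV. \<Sum>c1\<in>UNIV.
      (\<psi>1 (fst p) b1 * cnj (\<psi>1 (fst q) b1)) * (\<psi>3 b2 c2 * cnj (\<psi>3 b2 c2)) * (\<psi>2 (snd p) c1 * cnj (\<psi>2 (snd q) c1)))"
    by (intro sum.cong refl) (rule sum.swap)
  also have "\<dots> = (\<Sum>b1\<in>UNIV. \<psi>1 (fst p) b1 * cnj (\<psi>1 (fst q) b1))
      * (\<Sum>b2\<in>UNIV. \<Sum>c2\<in>UNIV. \<psi>3 b2 c2 * cnj (\<psi>3 b2 c2))
      * (\<Sum>c1\<in>UNIV. \<psi>2 (snd p) c1 * cnj (\<psi>2 (snd q) c1))"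
    by (rule sum_nested4_mult)
  finally show ?thesis
    by (simp add: mat_kron_def mtrace_def mat_mul_def mat_adj_def mult_ac)
qed

lemma rhoB_tri_state:
  "rhoB (tri_state \<psi>1 \<psi>2 \<psi>3) p q = mat_kron (gram (mat_transpose \<psi>1)) (gram \<psi>3) p q * mtrace (gram \<psi>2)"
proof -
  have "rhoB (tri_state \<psi>1 \<psi>2 \<psi>3) p q = (\<Sum>a1\<in>UNIV. \<Sum>a2\<in>UNIV. \<Sum>c1\<in>UNIV. \<Sum>c2\<in>UNIV.
      (\<psi>1 a1 (fst p) * cnj (\<psi>1 a1 (fst q))) * (\<psi>2 a2 c1 * cnj (\<psi>2 a2 c1)) * (\<psi>3 (snd p) c2 * cnj (\<psi>3 (snd q) c2)))"
    unfolding rhoB_def sum_UNIV_prod tri_state_def by (simp add: mult_ac)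
  also have "\<dots> = (\<Sum>a1\<in>UNIV. \<psi>1 a1 (fst p) * cnj (\<psi>1 a1 (fst q)))
      * (\<Sum>a2\<in>UNIV. \<Sum>c1\<in>UNIV. \<psi>2 a2 c1 * cnj (\<psi>2 a2 c1))
      * (\<Sum>c2\<in>UNIV. \<psi>3 (snd p) c2 * cnj (\<psi>3 (snd q) c2))"
    by (rule sum_nested4_mult)
  finally show ?thesis
    by (simp add: mat_kron_def mtrace_def mat_mul_def mat_adj_def mat_transpose_def mult_ac)
qed

lemma rhoC_tri_state:
  "rhoC (tri_state \<psi>1 \<psi>2 \<psi>3) p q
     = mat_kron (gram (mat_transpose \<psi>2)) (gram (mat_transpose \<psi>3)) p q * mtrace (gram \<psi>1)"
proof -
  have "rhoC (tri_state \<psi>1 \<psi>2 \<psi>3) p q = (\<Sum>a1\<in>UNIV. \<Sum>a2\<in>UNIV. \<Sum>b1\<in>UNIV. \<Sum>b2\<in>UNIV.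
      (\<psi>1 a1 b1 * cnj (\<psi>1 a1 b1)) * (\<psi>2 a2 (fst p) * cnj (\<psi>2 a2 (fst q))) * (\<psi>3 b2 (snd p) * cnj (\<psi>3 b2 (snd q))))"
    unfolding rhoC_def sum_UNIV_prod tri_state_def by (simp add: mult_ac)
  also have "\<dots> = (\<Sum>a2\<in>UNIV. \<Sum>a1\<in>UNIV. \<Sum>b1\<in>UNIV. \<Sum>b2\<in>UNIV.
      (\<psi>2 a2 (fst p) * cnj (\<psi>2 a2 (fst q))) * (\<psi>1 a1 b1 * cnj (\<psi>1 a1 b1)) * (\<psi>3 b2 (snd p) * cnj (\<psi>3 b2 (snd q))))"
    by (subst sum.swap) (simp add: mult_ac)
  also have "\<dots> = (\<Sum>a2\<in>UNIV. \<psi>2 a2 (fst p) * cnj (\<psi>2 a2 (fst q)))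
      * (\<Sum>a1\<in>UNIV. \<Sum>b1\<in>UNIV. \<psi>1 a1 b1 * cnj (\<psi>1 a1 b1))
      * (\<Sum>b2\<in>UNIV. \<psi>3 b2 (snd p) * cnj (\<psi>3 b2 (snd q)))"
    by (rule sum_nested4_mult)
  finally show ?thesis
    by (simp add: mat_kron_def mtrace_def mat_mul_def mat_adj_def mat_transpose_def mult_ac)
qed

end

context
  fixes \<psi>1 :: "'a1::finite \<Rightarrow> 'b1::finite \<Rightarrow> complex"
    and \<psi>2 :: "'a2::finite \<Rightarrow> 'c1::finite \<Rightarrow> complex"
    and \<psi>3 :: "'b2::finite \<Rightarrow> 'c2::finite \<Rightarrow> complex"
  assumes unit: "unit_bip \<psi>1" "unit_bip \<psi>2" "unit_bip \<psi>3"
begin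

lemma mtrace_gram_unit: "mtrace (gram \<psi>1) = 1" "mtrace (gram \<psi>2) = 1" "mtrace (gram \<psi>3) = 1"
  using unit by (simp_all add: mtrace_gram unit_bip_hs_norm2)

lemma mtrace_mpow_rhoA:
  "mtrace (mpow (rhoA (tri_state \<psi>1 \<psi>2 \<psi>3)) n) = mtrace (mpow (gram \<psi>1) n) * mtrace (mpow (gram \<psi>2) n)"
proof -
  have "rhoA (tri_state \<psi>1 \<psi>2 \<psi>3) = mat_kron (gram \<psi>1) (gram \<psi>2)"
    by (intro ext) (simp add: rhoA_tri_state mtrace_gram_unit)
  then show ?thesis by (simp add: mpow_mat_kron mtrace_mat_kron)
qed

lemma mtrace_mpow_rhoB:
  assumes "n \<ge> 1"
  shows "mtrace (mpow (rhoB (tri_state \<psi>1 \<psi>2 \<psi>3)) n) = mtrace (mpow (gram \<psi>1) n) * mtrace (mpow (gram \<psi>3) n)"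
proof -
  have "rhoB (tri_state \<psi>1 \<psi>2 \<psi>3) = mat_kron (gram (mat_transpose \<psi>1)) (gram \<psi>3)"
    by (intro ext) (simp add: rhoB_tri_state mtrace_gram_unit)
  then show ?thesis by (simp add: mpow_mat_kron mtrace_mat_kron mtrace_mpow_gram_transpose[OF assms])
qed

lemma mtrace_mpow_rhoC:
  assumes "n \<ge> 1"
  shows "mtrace (mpow (rhoC (tri_state \<psi>1 \<psi>2 \<psi>3)) n) = mtrace (mpow (gram \<psi>2) n) * mtrace (mpow (gram \<psi>3) n)"
proof -
  have "rhoC (tri_state \<psi>1 \<psi>2 \<psi>3) = mat_kron (gram (mat_transpose \<psi>2)) (gram (mat_transpose \<psi>3))"
    by (intro ext) (simp add: rhoC_tri_state mtrace_gram_unit)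
  then show ?thesis by (simp add: mpow_mat_kron mtrace_mat_kron mtrace_mpow_gram_transpose[OF assms])
qed

lemma mtrace_mpow_gram_unit:
  obtains t1 t2 t3 :: real
  where "t1 > 0" "t2 > 0" "t3 > 0" "mtrace (mpow (gram \<psi>1) n) = t1"
    "mtrace (mpow (gram \<psi>2) n) = t2" "mtrace (mpow (gram \<psi>3) n) = t3"
proof -
  have "\<psi>1 \<noteq> (\<lambda>x y. 0)" "\<psi>2 \<noteq> (\<lambda>x y. 0)" "\<psi>3 \<noteq> (\<lambda>x y. 0)"
    using unit by (simp_all add: unit_bip_hs_norm2 flip: hs_norm2_pos_iff)
  then show thesis
    using that mtrace_mpow_gram_pos by meson
qed

lemma renyi_tri_state:
  assumes "n \<ge> 1" and "mtrace (mpow (gram \<psi>1) n) = t1" "mtrace (mpow (gram \<psi>2) n) = t2"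
    "mtrace (mpow (gram \<psi>3) n) = t3" and "t1 > 0" "t2 > 0" "t3 > 0"
  shows "(renyi n (rhoA (tri_state \<psi>1 \<psi>2 \<psi>3)) + renyi n (rhoB (tri_state \<psi>1 \<psi>2 \<psi>3))
       + renyi n (rhoC (tri_state \<psi>1 \<psi>2 \<psi>3))) / 2 = ln (t1 * t2 * t3) / (1 - real n)"
proof -
  have "renyi n (rhoA (tri_state \<psi>1 \<psi>2 \<psi>3)) = (ln t1 + ln t2) / (1 - real n)"
    "renyi n (rhoB (tri_state \<psi>1 \<psi>2 \<psi>3)) = (ln t1 + ln t3) / (1 - real n)"
    "renyi n (rhoC (tri_state \<psi>1 \<psi>2 \<psi>3)) = (ln t2 + ln t3) / (1 - real n)"
    using assms by (simp_all add: renyi_def mtrace_mpow_rhoA mtrace_mpow_rhoB mtrace_mpow_rhoC ln_mult)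
  then show ?thesis
    using assms by (cases "1 - real n = 0") (simp_all add: ln_mult field_simps)
qed

lemma Gn_tri_state:
  assumes n: "n \<ge> 2"
  shows "Im (Zn n (tri_state \<psi>1 \<psi>2 \<psi>3)) = 0 \<and> Re (Zn n (tri_state \<psi>1 \<psi>2 \<psi>3)) > 0 \<and>
      Gn n (tri_state \<psi>1 \<psi>2 \<psi>3) =
        (renyi n (rhoA (tri_state \<psi>1 \<psi>2 \<psi>3)) + renyi n (rhoB (tri_state \<psi>1 \<psi>2 \<psi>3))
         + renyi n (rhoC (tri_state \<psi>1 \<psi>2 \<psi>3))) / 2"
proof -
  obtain t1 t2 t3 :: real where t: "t1 > 0" "t2 > 0" "t3 > 0" "mtrace (mpow (gram \<psi>1) n) = t1"
    "mtrace (mpow (gram \<psi>2) n) = t2" "mtrace (mpow (gram \<psi>3) n) = t3"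
    by (rule mtrace_mpow_gram_unit)
  have Z: "Zn n (tri_state \<psi>1 \<psi>2 \<psi>3) = complex_of_real ((t1 * t2 * t3) ^ n)"
    using n by (simp add: Zn_tri_state t)
  have "Gn n (tri_state \<psi>1 \<psi>2 \<psi>3) = real n * ln (t1 * t2 * t3) / (real n * (1 - real n))"
    using t by (simp add: Gn_def Z ln_realpow)
  also have "\<dots> = ln (t1 * t2 * t3) / (1 - real n)"
    using n by simp
  also have "\<dots> = (renyi n (rhoA (tri_state \<psi>1 \<psi>2 \<psi>3)) + renyi n (rhoB (tri_state \<psi>1 \<psi>2 \<psi>3))
       + renyi n (rhoC (tri_state \<psi>1 \<psi>2 \<psi>3))) / 2"
    using n t by (intro renyi_tri_state[symmetric]) simp_all
  finally show ?thesis
    using t by (simp add: Z)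
qed

lemma G_tri_state:
  "G (tri_state \<psi>1 \<psi>2 \<psi>3) =
    (renyi 2 (rhoA (tri_state \<psi>1 \<psi>2 \<psi>3)) + renyi 2 (rhoB (tri_state \<psi>1 \<psi>2 \<psi>3))
     + renyi 2 (rhoC (tri_state \<psi>1 \<psi>2 \<psi>3))) / 2"
proof -
  obtain t1 t2 t3 :: real where t: "t1 > 0" "t2 > 0" "t3 > 0" "mtrace (mpow (gram \<psi>1) 2) = t1"
    "mtrace (mpow (gram \<psi>2) 2) = t2" "mtrace (mpow (gram \<psi>3) 2) = t3"
    by (rule mtrace_mpow_gram_unit)
  have "G (tri_state \<psi>1 \<psi>2 \<psi>3) = - ln (t1 * t2 * t3)"
    using t by (simp add: G_def perm_expect_G_tri_state ln_realpow)
  also have "\<dots> = ln (t1 * t2 * t3) / (1 - real 2)"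
    by simp
  also have "\<dots> = (renyi 2 (rhoA (tri_state \<psi>1 \<psi>2 \<psi>3)) + renyi 2 (rhoB (tri_state \<psi>1 \<psi>2 \<psi>3))
       + renyi 2 (rhoC (tri_state \<psi>1 \<psi>2 \<psi>3))) / 2"
    using t by (intro renyi_tri_state[symmetric]) simp_all
  finally show ?thesis .
qed

end

theorem mainTheorem9:
  fixes \<psi>1 :: "'a1::finite \<Rightarrow> 'b1::finite \<Rightarrow> complex"
    and \<psi>2 :: "'a2::finite \<Rightarrow> 'c1::finite \<Rightarrow> complex"
    and \<psi>3 :: "'b2::finite \<Rightarrow> 'c2::finite \<Rightarrow> complex"
  assumes "unit_bip \<psi>1" and "unit_bip \<psi>2" and "unit_bip \<psi>3"
  shows "(\<forall>n::nat. n \<ge> 2 \<longrightarrow>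
            Im (Zn n (tri_state \<psi>1 \<psi>2 \<psi>3)) = 0 \<and> Re (Zn n (tri_state \<psi>1 \<psi>2 \<psi>3)) > 0 \<and>
            Gn n (tri_state \<psi>1 \<psi>2 \<psi>3) =
              (renyi n (rhoA (tri_state \<psi>1 \<psi>2 \<psi>3)) + renyi n (rhoB (tri_state \<psi>1 \<psi>2 \<psi>3))
               + renyi n (rhoC (tri_state \<psi>1 \<psi>2 \<psi>3))) / 2)
         \<and> G (tri_state \<psi>1 \<psi>2 \<psi>3) =
              (renyi 2 (rhoA (tri_state \<psi>1 \<psi>2 \<psi>3)) + renyi 2 (rhoB (tri_state \<psi>1 \<psi>2 \<psi>3))
               + renyi 2 (rhoC (tri_state \<psi>1 \<psi>2 \<psi>3))) / 2"
  using Gn_tri_state[OF assms] G_tri_state[OF assms] by blast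

end
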